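(* Let $q>0$ be a constant and let $y$ be a (twice differentiable) solution on $[0,\infty)$ of $$y''(x)+q^2x\,y(x)=u(x).$$ Then there are constants $c_1,c_2$ such that for every $x\ge0$ for which the integral below exists, $$y(x)=\sqrt x\left(c_1J_{-1/3}\!\left(\tfrac{2qx^{3/2}}{3}\right)+c_2J_{1/3}\!\left(\tfrac{2qx^{3/2}}{3}\right)\right)+\theta\,q^{-1}x^{-1/4}\int_0^x|u(t)|\,t^{-1/4}\,dt,$$ for some $\theta=\theta(x)$ with $|\theta|\le1$.
   Context: $J_{\pm1/3}$ are Bessel functions of the first kind of orders $\pm\frac13$. The letter $\theta$ denotes a quantity with $|\theta|\le1$. *)

theory Defs
  imports "HOL-Analysis.Analysis"
begin

definition bessel_J :: "real \<Rightarrow> real \<Rightarrow> real" where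
  "bessel_J \<nu> z =
     (\<Sum>m. (-1) ^ m / (fact m * Gamma (real m + \<nu> + 1)) * (z / 2) powr (2 * real m + \<nu>))"

end

theory Submission
  imports Defs
begin

text \<open>
  Let \<open>f\<^sub>r(x) = \<surd>x J\<^sub>\<nu>(2qx^(3/2)/3)\<close> with \<open>\<nu> = (2r - 1)/3\<close>, r = 0, 1. These are
  power series in x supported on the exponents 3m + r, they solve the homogeneous equation,
  and their Wronskian is a nonzero constant. Subtracting the combination of \<open>f\<^sub>0\<close>, \<open>f\<^sub>1\<close>
  with the initial data y(0), y'(0) leaves a solution z with zero initial data, and variation
  of constants gives \<open>z(x) = \<integral>\<^sub>0\<^sup>x K(x,t) u(t) dt\<close>, where \<open>K(\<cdot>,t)\<close> solves the homogeneous
  equation with K(t,t) = 0 and \<open>\<partial>\<^sub>xK(t,t) = 1\<close>. In the variable \<open>P = \<surd>s\<close> an energy of such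
  a solution w is nonincreasing and dominates \<open>q\<^sup>2 P w\<^sup>2\<close>; comparing \<open>P = \<surd>x\<close> with \<open>P = \<surd>t\<close>
  gives \<open>|K(x,t)| \<le> q\<^sup>-\<^sup>1 x^(-1/4) t^(-1/4)\<close>, which is the claimed bound for z(x).
\<close>

section \<open>The homogeneous solutions as power series\<close>

definition airy_order :: "nat \<Rightarrow> real" where
  "airy_order r = (2 * real r - 1) / 3"

definition airy_coeff :: "real \<Rightarrow> nat \<Rightarrow> nat \<Rightarrow> real" where
  "airy_coeff q r m =
     (-1) ^ m / (fact m * Gamma (real m + airy_order r + 1)) * (q / 3) powr (2 * real m + airy_order r)"

text \<open>The coefficients of \<open>\<surd>x J\<^sub>\<nu>(2qx^(3/2)/3)\<close>, \<open>\<nu> = airy_order r\<close>, as a power series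
  in x: they sit at the exponents \<open>n \<equiv> r (mod 3)\<close>.\<close>
definition airy_powser :: "real \<Rightarrow> nat \<Rightarrow> nat \<Rightarrow> real" where
  "airy_powser q r n = (if n mod 3 = r then airy_coeff q r (n div 3) else 0)"

definition airy_sol :: "real \<Rightarrow> nat \<Rightarrow> real \<Rightarrow> real" where
  "airy_sol q r x = (\<Sum>n. airy_powser q r n * x ^ n)"

definition airy_sol_deriv :: "real \<Rightarrow> nat \<Rightarrow> real \<Rightarrow> real" where
  "airy_sol_deriv q r x = (\<Sum>n. diffs (airy_powser q r) n * x ^ n)"

lemma airy_coeff_Suc:
  assumes "q > 0" and "r \<le> 1"
  shows "airy_coeff q r (Suc m) =
           - q\<^sup>2 * airy_coeff q r m / ((3 * real m + real r + 3) * (3 * real m + real r + 2))"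
proof -
  have pos: "real m + airy_order r + 1 > 0"
    using \<open>r \<le> 1\<close> by (cases r) (auto simp: airy_order_def)
  then have "real m + airy_order r + 1 \<notin> \<int>\<^sub>\<le>\<^sub>0"
    using nonpos_Ints_nonpos by fastforce
  then have Gamma_Suc: "Gamma (real (Suc m) + airy_order r + 1)
                        = (real m + airy_order r + 1) * Gamma (real m + airy_order r + 1)"
    using Gamma_plus1[of "real m + airy_order r + 1"] by (simp add: add_ac)
  have "(q / 3) powr (2 * real (Suc m) + airy_order r) = (q / 3) powr (2 + (2 * real m + airy_order r))"
    by (simp add: algebra_simps)
  also have "\<dots> = (q / 3)\<^sup>2 * (q / 3) powr (2 * real m + airy_order r)"
    using \<open>q > 0\<close> by (simp add: powr_add powr_realpow')
  finally have powr_Suc: "(q / 3) powr (2 * real (Suc m) + airy_order r)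
                          = (q / 3)\<^sup>2 * (q / 3) powr (2 * real m + airy_order r)" .
  have denom: "(3 * real m + real r + 3) * (3 * real m + real r + 2)
               = 9 * ((real m + 1) * (real m + airy_order r + 1))"
    using \<open>r \<le> 1\<close> by (cases r) (auto simp: airy_order_def algebra_simps)
  show ?thesis
    unfolding airy_coeff_def Gamma_Suc powr_Suc denom
    using pos Gamma_real_pos[OF pos] by (simp add: field_simps power2_eq_square)
qed

lemma summable_airy_coeff:
  assumes "q > 0" and "r \<le> 1"
  shows "summable (\<lambda>m. airy_coeff q r m * s ^ m)"
proof (rule summable_ratio_test[where c = "1/2" and N = "nat \<lceil>2 * q\<^sup>2 * \<bar>s\<bar>\<rceil>"])
  fix m assume m: "m \<ge> nat \<lceil>2 * q\<^sup>2 * \<bar>s\<bar>\<rceil>"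
  define D where "D = (3 * real m + real r + 3) * (3 * real m + real r + 2)"
  have "2 * q\<^sup>2 * \<bar>s\<bar> \<le> real m" using m by linarith
  also have "\<dots> \<le> D" unfolding D_def by (simp add: algebra_simps)
  finally have D_large: "2 * q\<^sup>2 * \<bar>s\<bar> \<le> D" .
  have D_pos: "D > 0" unfolding D_def by (simp add: add_pos_nonneg)
  have "norm (airy_coeff q r (Suc m) * s ^ Suc m) = (q\<^sup>2 * \<bar>s\<bar> / D) * norm (airy_coeff q r m * s ^ m)"
    unfolding airy_coeff_Suc[OF assms] D_def[symmetric] using D_pos
    by (simp add: abs_mult abs_divide power_abs field_simps)
  also have "\<dots> \<le> (1/2) * norm (airy_coeff q r m * s ^ m)"
    by (rule mult_right_mono) (use D_large D_pos in \<open>auto simp: field_simps\<close>)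
  finally show "norm (airy_coeff q r (Suc m) * s ^ Suc m) \<le> (1/2) * norm (airy_coeff q r m * s ^ m)" .
qed simp

lemma airy_powser_sums_iff:
  assumes "r \<le> 1"
  shows "(\<lambda>n. airy_powser q r n * x ^ n) sums S \<longleftrightarrow> (\<lambda>m. airy_coeff q r m * x ^ (3 * m + r)) sums S"
proof -
  have mono: "strict_mono (\<lambda>m::nat. 3 * m + r)" by (rule strict_monoI) simp
  have "airy_powser q r n * x ^ n = 0" if "n \<notin> range (\<lambda>m. 3 * m + r)" for n
  proof -
    have "n mod 3 \<noteq> r"
    proof
      assume "n mod 3 = r"
      then have "n = 3 * (n div 3) + r" by (metis div_mult_mod_eq mult.commute)
      with that show False by blast
    qed
    then show ?thesis by (simp add: airy_powser_def)
  qed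
  moreover have "(\<lambda>m. airy_powser q r (3 * m + r) * x ^ (3 * m + r)) = (\<lambda>m. airy_coeff q r m * x ^ (3 * m + r))"
    using assms by (auto simp: airy_powser_def)
  ultimately show ?thesis
    using sums_mono_reindex[OF mono, of "\<lambda>n. airy_powser q r n * x ^ n" S] by simp
qed

lemma summable_airy_powser:
  assumes "q > 0" and "r \<le> 1"
  shows "summable (\<lambda>n. airy_powser q r n * x ^ n)"
proof -
  have "summable (\<lambda>m. x ^ r * (airy_coeff q r m * (x ^ 3) ^ m))"
    by (rule summable_mult[OF summable_airy_coeff[OF assms]])
  moreover have "(\<lambda>m. x ^ r * (airy_coeff q r m * (x ^ 3) ^ m)) = (\<lambda>m. airy_coeff q r m * x ^ (3 * m + r))"
    by (auto simp: power_add power_mult[symmetric] mult_ac)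
  ultimately show ?thesis
    using airy_powser_sums_iff[OF \<open>r \<le> 1\<close>] unfolding summable_def by auto
qed

lemma airy_powser_recurrence:
  assumes "q > 0" and "r \<le> 1"
  shows "(real n + 3) * (real n + 2) * airy_powser q r (n + 3) = - q\<^sup>2 * airy_powser q r n"
proof (cases "n mod 3 = r")
  case True
  define m where "m = n div 3"
  have n: "n = 3 * m + r" using True unfolding m_def by (metis div_mult_mod_eq mult.commute)
  have "airy_powser q r (n + 3) = airy_coeff q r (Suc m)" "airy_powser q r n = airy_coeff q r m"
    using True by (auto simp: airy_powser_def m_def)
  moreover have "(3 * real m + real r + 3) * (3 * real m + real r + 2) \<noteq> 0"
    by (simp add: add_pos_nonneg)
  ultimately show ?thesis unfolding airy_coeff_Suc[OF assms] n by (simp add: field_simps)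
next
  case False
  then show ?thesis by (simp add: airy_powser_def)
qed

lemma powser_airy_equation:
  fixes c :: "nat \<Rightarrow> real"
  assumes summable: "\<And>y. summable (\<lambda>n. c n * y ^ n)"
    and "c 2 = 0"
    and recurrence: "\<And>n. (real n + 3) * (real n + 2) * c (n + 3) = - q\<^sup>2 * c n"
  shows "(\<Sum>n. diffs (diffs c) n * x ^ n) = - q\<^sup>2 * x * (\<Sum>n. c n * x ^ n)"
proof -
  define d where "d = diffs (diffs c)"
  have "summable (\<lambda>n. d n * x ^ n)"
    unfolding d_def by (intro termdiff_converges_all summable)
  moreover have "d 0 = 0" using \<open>c 2 = 0\<close> by (simp add: d_def diffs_def numeral_2_eq_2)
  moreover have d_Suc: "d (Suc n) = - q\<^sup>2 * c n" for n
    using recurrence[of n] by (simp add: d_def diffs_def eval_nat_numeral algebra_simps)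
  ultimately have "(\<Sum>n. d n * x ^ n) = (\<Sum>n. (- q\<^sup>2 * x) * (c n * x ^ n))"
    using suminf_split_head[of "\<lambda>n. d n * x ^ n"] by (simp add: algebra_simps)
  also have "\<dots> = - q\<^sup>2 * x * (\<Sum>n. c n * x ^ n)"
    by (rule suminf_mult[OF summable])
  finally show ?thesis unfolding d_def .
qed

lemma has_real_derivative_airy_sol:
  assumes "q > 0" and "r \<le> 1"
  shows "(airy_sol q r has_real_derivative airy_sol_deriv q r x) (at x)"
  unfolding airy_sol_def[abs_def] airy_sol_deriv_def
  by (rule termdiffs_strong_converges_everywhere[OF summable_airy_powser[OF assms]])

lemma has_real_derivative_airy_sol_deriv:
  assumes "q > 0" and "r \<le> 1"
  shows "(airy_sol_deriv q r has_real_derivative - (q\<^sup>2 * x) * airy_sol q r x) (at x)"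
proof -
  have summable: "\<And>y. summable (\<lambda>n. airy_powser q r n * y ^ n)"
    by (rule summable_airy_powser[OF assms])
  have "(airy_sol_deriv q r has_real_derivative (\<Sum>n. diffs (diffs (airy_powser q r)) n * x ^ n)) (at x)"
    unfolding airy_sol_deriv_def[abs_def]
    by (intro termdiffs_strong_converges_everywhere termdiff_converges_all summable)
  also have "(\<Sum>n. diffs (diffs (airy_powser q r)) n * x ^ n) = - q\<^sup>2 * x * airy_sol q r x"
    unfolding airy_sol_def using assms
    by (intro powser_airy_equation summable airy_powser_recurrence) (simp add: airy_powser_def)
  finally show ?thesis by simp
qed

lemma airy_sol_at_0:
  "airy_sol q 0 0 = airy_coeff q 0 0" "airy_sol_deriv q 0 0 = 0"
  "airy_sol q 1 0 = 0" "airy_sol_deriv q 1 0 = airy_coeff q 1 0"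
  by (simp_all add: airy_sol_def airy_sol_deriv_def airy_powser_def diffs_def)

lemma airy_coeff_0_pos: "q > 0 \<Longrightarrow> r \<le> 1 \<Longrightarrow> airy_coeff q r 0 > 0"
  by (cases r) (auto simp: airy_coeff_def airy_order_def)

lemma bessel_J_term_eq_airy_coeff:
  assumes "x > 0" and "q > 0"
  shows "(-1) ^ m / (fact m * Gamma (real m + airy_order r + 1))
           * (2 * q * x powr (3/2) / 3 / 2) powr (2 * real m + airy_order r)
         = airy_coeff q r m * x ^ (3 * m + r) / sqrt x"
proof -
  have exponent: "3/2 * (2 * real m + airy_order r) = real (3 * m + r) - 1/2"
    by (simp add: airy_order_def field_simps)
  have "(2 * q * x powr (3/2) / 3 / 2) powr (2 * real m + airy_order r)
        = (q / 3) powr (2 * real m + airy_order r) * (x powr (3/2)) powr (2 * real m + airy_order r)"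
    using assms by (simp add: powr_mult[symmetric])
  also have "(x powr (3/2)) powr (2 * real m + airy_order r) = x powr (real (3 * m + r) - 1/2)"
    unfolding powr_powr exponent ..
  also have "\<dots> = x powr real (3 * m + r) / x powr (1/2)"
    by (rule powr_diff)
  also have "\<dots> = x ^ (3 * m + r) / sqrt x"
    by (subst powr_realpow[OF \<open>x > 0\<close>]) (simp add: powr_half_sqrt \<open>x > 0\<close> less_imp_le)
  finally show ?thesis by (simp add: airy_coeff_def)
qed

lemma sqrt_bessel_J_eq_airy_sol:
  assumes "x > 0" and "q > 0" and "r \<le> 1"
  shows "sqrt x * bessel_J (airy_order r) (2 * q * x powr (3/2) / 3) = airy_sol q r x"
proof -
  have "(\<lambda>n. airy_powser q r n * x ^ n) sums airy_sol q r x"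
    unfolding airy_sol_def using summable_airy_powser[OF assms(2,3)] by (rule summable_sums)
  then have "(\<lambda>m. airy_coeff q r m * x ^ (3 * m + r) / sqrt x) sums (airy_sol q r x / sqrt x)"
    using airy_powser_sums_iff[OF \<open>r \<le> 1\<close>] sums_divide by blast
  then have "bessel_J (airy_order r) (2 * q * x powr (3/2) / 3) = airy_sol q r x / sqrt x"
    unfolding bessel_J_def bessel_J_term_eq_airy_coeff[OF assms(1,2)] by (rule sums_unique[symmetric])
  then show ?thesis using \<open>x > 0\<close> by simp
qed

section \<open>Linear second order equations\<close>

lemma wronskian_constant:
  fixes f f' g g' p :: "real \<Rightarrow> real"
  assumes df: "\<And>s. (f has_real_derivative f' s) (at s)"
    and df': "\<And>s. (f' has_real_derivative - p s * f s) (at s)"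
    and dg: "\<And>s. (g has_real_derivative g' s) (at s)"
    and dg': "\<And>s. (g' has_real_derivative - p s * g s) (at s)"
  shows "f s * g' s - f' s * g s = f 0 * g' 0 - f' 0 * g 0"
proof -
  have "((\<lambda>s. f s * g' s - f' s * g s) has_real_derivative 0) (at s)" for s
    by (rule derivative_eq_intros df dg df' dg' refl)+ (simp add: algebra_simps)
  then show ?thesis
    using DERIV_isconst_all[of "\<lambda>s. f s * g' s - f' s * g s" s 0] by blast
qed

lemma variation_of_constants:
  fixes f f' g g' p z z' z'' u :: "real \<Rightarrow> real"
  assumes df: "\<And>s. (f has_real_derivative f' s) (at s)"
    and df': "\<And>s. (f' has_real_derivative - p s * f s) (at s)"
    and dg: "\<And>s. (g has_real_derivative g' s) (at s)"
    and dg': "\<And>s. (g' has_real_derivative - p s * g s) (at s)"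
    and wronskian: "\<And>s. f s * g' s - f' s * g s = W" and "W \<noteq> 0"
    and "0 \<le> x"
    and dz: "\<And>t. t \<in> {0..x} \<Longrightarrow> (z has_real_derivative z' t) (at t within {0..x})"
    and dz': "\<And>t. t \<in> {0..x} \<Longrightarrow> (z' has_real_derivative z'' t) (at t within {0..x})"
    and ode: "\<And>t. t \<in> {0..x} \<Longrightarrow> z'' t + p t * z t = u t"
    and "z 0 = 0" "z' 0 = 0"
  shows "((\<lambda>t. (f t * g x - f x * g t) / W * u t) has_integral z x) {0..x}"
proof -
  define K where "K t = (f t * g x - f x * g t) / W" for t
  define K' where "K' t = (f' t * g x - f x * g' t) / W" for t
  note within = df[THEN has_field_derivative_at_within] dg[THEN has_field_derivative_at_within]
    df'[THEN has_field_derivative_at_within] dg'[THEN has_field_derivative_at_within]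
  have dK: "(K has_real_derivative K' t) (at t within S)" for t S
    unfolding K_def K'_def using \<open>W \<noteq> 0\<close>
    by (auto intro!: derivative_eq_intros within simp: field_simps)
  have dK': "(K' has_real_derivative - p t * K t) (at t within S)" for t S
    unfolding K_def K'_def using \<open>W \<noteq> 0\<close>
    by (auto intro!: derivative_eq_intros within simp: field_simps)
  have "((\<lambda>t. K t * z' t - K' t * z t) has_real_derivative K t * u t) (at t within {0..x})"
    if "t \<in> {0..x}" for t
    by (rule derivative_eq_intros dK dK' dz[OF that] dz'[OF that] refl)+
      (simp add: ode[OF that, symmetric] algebra_simps)
  then have "((\<lambda>t. K t * u t) has_integral (K x * z' x - K' x * z x) - (K 0 * z' 0 - K' 0 * z 0)) {0..x}"
    using \<open>0 \<le> x\<close> by (intro fundamental_theorem_of_calculus)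
      (auto simp: has_real_derivative_iff_has_vector_derivative[symmetric])
  moreover have "K x = 0" "K' x = -1"
    using wronskian[of x] \<open>W \<noteq> 0\<close> by (auto simp: K_def K'_def field_simps)
  ultimately show ?thesis
    using \<open>z 0 = 0\<close> \<open>z' 0 = 0\<close> by (simp add: K_def)
qed

section \<open>The kernel estimate\<close>

text \<open>For \<open>W(P) = w(P\<^sup>2)\<close>, \<open>V(P) = w'(P\<^sup>2)\<close> with \<open>w'' = -q\<^sup>2 s w\<close>, the lower order
  terms are chosen so that the derivative in P is \<open>-15 W\<^sup>2/(8P\<^sup>6) \<le> 0\<close>.\<close>
definition airy_energy :: "real \<Rightarrow> (real \<Rightarrow> real) \<Rightarrow> (real \<Rightarrow> real) \<Rightarrow> real \<Rightarrow> real" where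
  "airy_energy q W V P =
     q\<^sup>2 * P * (W P)\<^sup>2 + (V P)\<^sup>2 / P + W P * V P / (2 * P ^ 3) + 3 * (W P)\<^sup>2 / (8 * P ^ 5)"

lemma airy_energy_ge:
  assumes "P > 0"
  shows "q\<^sup>2 * P * (W P)\<^sup>2 \<le> airy_energy q W V P"
proof -
  have "a\<^sup>2 / P + b * a / (2 * P ^ 3) + 3 * b\<^sup>2 / (8 * P ^ 5)
        = ((a + b / (4 * P\<^sup>2))\<^sup>2 + 5 / 16 * (b / P\<^sup>2)\<^sup>2) / P" for a b
    using assms by (simp add: field_simps power2_eq_square) algebra
  then have "airy_energy q W V P
        = q\<^sup>2 * P * (W P)\<^sup>2 + ((V P + W P / (4 * P\<^sup>2))\<^sup>2 + 5 / 16 * (W P / P\<^sup>2)\<^sup>2) / P"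
    unfolding airy_energy_def add.assoc by (simp only:)
  moreover have "((V P + W P / (4 * P\<^sup>2))\<^sup>2 + 5 / 16 * (W P / P\<^sup>2)\<^sup>2) / P \<ge> 0"
    using assms by (intro divide_nonneg_pos add_nonneg_nonneg) auto
  ultimately show ?thesis by linarith
qed

lemma airy_energy_antimono:
  fixes W V :: "real \<Rightarrow> real"
  assumes dW: "\<And>P. (W has_real_derivative V P * (2 * P)) (at P)"
    and dV: "\<And>P. (V has_real_derivative - q\<^sup>2 * P\<^sup>2 * W P * (2 * P)) (at P)"
    and "0 < a" "a \<le> b"
  shows "airy_energy q W V b \<le> airy_energy q W V a"
proof (rule DERIV_nonpos_imp_nonincreasing[OF \<open>a \<le> b\<close>])
  fix P assume "a \<le> P" "P \<le> b"
  then have "P > 0" using \<open>0 < a\<close> by linarith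
  have "(airy_energy q W V has_real_derivative - 15 / 8 * (W P)\<^sup>2 / P ^ 6) (at P)"
    unfolding airy_energy_def[abs_def]
    apply (rule derivative_eq_intros dW dV refl | (use \<open>P > 0\<close> in simp; fail))+
    using \<open>P > 0\<close> by simp_all (simp add: field_simps, simp add: algebra_simps power2_eq_square eval_nat_numeral)
  moreover have "- 15 / 8 * (W P)\<^sup>2 / P ^ 6 \<le> 0"
    by (simp add: divide_nonpos_nonneg)
  ultimately show "\<exists>D. (airy_energy q W V has_real_derivative D) (at P) \<and> D \<le> 0"
    by blast
qed

lemma power2_powr_minus_quarter: "a > 0 \<Longrightarrow> (a powr (-1/4))\<^sup>2 = 1 / sqrt (a :: real)"
  by (simp add: power2_eq_square powr_add[symmetric] powr_minus_divide powr_half_sqrt)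

lemma airy_kernel_bound:
  fixes w w' :: "real \<Rightarrow> real"
  assumes "q > 0"
    and dw: "\<And>s. (w has_real_derivative w' s) (at s)"
    and dw': "\<And>s. (w' has_real_derivative - (q\<^sup>2 * s) * w s) (at s)"
    and "0 < t" "t \<le> x" and "w t = 0" "w' t = 1"
  shows "\<bar>w x\<bar> \<le> 1 / q * x powr (-1/4) * t powr (-1/4)"
proof -
  define W where "W P = w (P\<^sup>2)" for P
  define V where "V P = w' (P\<^sup>2)" for P
  have dW: "(W has_real_derivative V P * (2 * P)) (at P)" for P
    unfolding W_def[abs_def] V_def by (rule DERIV_chain2[OF dw]) (auto intro!: derivative_eq_intros)
  have dV: "(V has_real_derivative - q\<^sup>2 * P\<^sup>2 * W P * (2 * P)) (at P)" for P
  proof -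
    have "((\<lambda>P. w' (P\<^sup>2)) has_real_derivative - (q\<^sup>2 * P\<^sup>2) * w (P\<^sup>2) * (2 * P)) (at P)"
      by (rule DERIV_chain2[OF dw']) (auto intro!: derivative_eq_intros)
    then show ?thesis by (simp add: W_def V_def[abs_def])
  qed
  have "0 < sqrt t" "sqrt t \<le> sqrt x"
    using \<open>0 < t\<close> \<open>t \<le> x\<close> by auto
  have "q\<^sup>2 * sqrt x * (w x)\<^sup>2 \<le> airy_energy q W V (sqrt x)"
    using airy_energy_ge[of "sqrt x" q W V] \<open>0 < t\<close> \<open>t \<le> x\<close> by (simp add: W_def)
  also have "\<dots> \<le> airy_energy q W V (sqrt t)"
    by (rule airy_energy_antimono[OF dW dV \<open>0 < sqrt t\<close> \<open>sqrt t \<le> sqrt x\<close>])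
  also have "\<dots> = 1 / sqrt t"
    using \<open>0 < t\<close> \<open>w t = 0\<close> \<open>w' t = 1\<close> by (simp add: airy_energy_def W_def V_def)
  finally have "(w x)\<^sup>2 \<le> 1 / (q\<^sup>2 * sqrt x * sqrt t)"
    using \<open>q > 0\<close> \<open>0 < t\<close> \<open>t \<le> x\<close> by (simp add: field_simps)
  also have "\<dots> = (1 / q * x powr (-1/4) * t powr (-1/4))\<^sup>2"
    using \<open>0 < t\<close> \<open>t \<le> x\<close> power2_powr_minus_quarter[of x] power2_powr_minus_quarter[of t]
    by (simp add: power_mult_distrib power_divide)
  finally have "\<bar>w x\<bar> \<le> \<bar>1 / q * x powr (-1/4) * t powr (-1/4)\<bar>"
    by (simp only: abs_le_square_iff)
  then show ?thesis
    using \<open>q > 0\<close> by simp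
qed

section \<open>The inhomogeneous equation\<close>

lemmas airy_sol_derivatives =
  has_real_derivative_airy_sol[OF _ le0] has_real_derivative_airy_sol_deriv[OF _ le0]
  has_real_derivative_airy_sol[OF _ order_refl] has_real_derivative_airy_sol_deriv[OF _ order_refl]

lemma airy_wronskian:
  assumes "q > 0"
  shows "airy_sol q 0 s * airy_sol_deriv q 1 s - airy_sol_deriv q 0 s * airy_sol q 1 s
         = airy_coeff q 0 0 * airy_coeff q 1 0"
  using wronskian_constant[where p = "\<lambda>s. q\<^sup>2 * s", OF airy_sol_derivatives[OF assms]]
  unfolding airy_sol_at_0 by simp

lemma airy_wronskian_nonzero: "q > 0 \<Longrightarrow> airy_coeff q 0 0 * airy_coeff q 1 0 \<noteq> 0"
  using airy_coeff_0_pos[of q 0] airy_coeff_0_pos[of q 1] by simp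

definition airy_green :: "real \<Rightarrow> real \<Rightarrow> real \<Rightarrow> real" where
  "airy_green q x t = (airy_sol q 0 t * airy_sol q 1 x - airy_sol q 0 x * airy_sol q 1 t)
                      / (airy_coeff q 0 0 * airy_coeff q 1 0)"

lemma airy_green_bound:
  assumes "q > 0" and "0 < t" "t \<le> x"
  shows "\<bar>airy_green q x t\<bar> \<le> 1 / q * x powr (-1/4) * t powr (-1/4)"
proof (rule airy_kernel_bound[OF \<open>q > 0\<close> _ _ \<open>0 < t\<close> \<open>t \<le> x\<close>])
  define W where "W = airy_coeff q 0 0 * airy_coeff q 1 0"
  define G' where "G' s = (airy_sol q 0 t * airy_sol_deriv q 1 s - airy_sol_deriv q 0 s * airy_sol q 1 t) / W" for s
  have "W \<noteq> 0" unfolding W_def by (rule airy_wronskian_nonzero[OF \<open>q > 0\<close>])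
  note derivs = airy_sol_derivatives[OF \<open>q > 0\<close>]
  show "((\<lambda>s. airy_green q s t) has_real_derivative G' s) (at s)" for s
    unfolding airy_green_def W_def[symmetric] G'_def
    by (rule derivative_eq_intros derivs refl)+ (use \<open>W \<noteq> 0\<close> in \<open>simp_all add: field_simps\<close>)
  show "(G' has_real_derivative - (q\<^sup>2 * s) * airy_green q s t) (at s)" for s
    unfolding airy_green_def W_def[symmetric] G'_def
    by (rule derivative_eq_intros derivs refl)+ (use \<open>W \<noteq> 0\<close> in \<open>simp_all add: field_simps\<close>)
  show "airy_green q t t = 0" by (simp add: airy_green_def)
  show "G' t = 1"
    using airy_wronskian[OF \<open>q > 0\<close>, of t] \<open>W \<noteq> 0\<close> by (simp add: G'_def W_def)
qed

lemma airy_green_has_integral: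
  fixes z z' z'' u :: "real \<Rightarrow> real"
  assumes "q > 0" and "0 \<le> x"
    and dz: "\<And>t. t \<in> {0..x} \<Longrightarrow> (z has_real_derivative z' t) (at t within {0..x})"
    and dz': "\<And>t. t \<in> {0..x} \<Longrightarrow> (z' has_real_derivative z'' t) (at t within {0..x})"
    and ode: "\<And>t. t \<in> {0..x} \<Longrightarrow> z'' t + q\<^sup>2 * t * z t = u t"
    and "z 0 = 0" "z' 0 = 0"
  shows "((\<lambda>t. airy_green q x t * u t) has_integral z x) {0..x}"
  unfolding airy_green_def
  by (rule variation_of_constants[where p = "\<lambda>s. q\<^sup>2 * s", OF airy_sol_derivatives[OF \<open>q > 0\<close>]
        airy_wronskian[OF \<open>q > 0\<close>] airy_wronskian_nonzero[OF \<open>q > 0\<close>] \<open>0 \<le> x\<close> dz dz' ode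
        \<open>z 0 = 0\<close> \<open>z' 0 = 0\<close>])

lemma airy_remainder_bound:
  fixes z z' z'' u :: "real \<Rightarrow> real"
  assumes "q > 0" and "x > 0"
    and dz: "\<And>t. t \<in> {0..x} \<Longrightarrow> (z has_real_derivative z' t) (at t within {0..x})"
    and dz': "\<And>t. t \<in> {0..x} \<Longrightarrow> (z' has_real_derivative z'' t) (at t within {0..x})"
    and ode: "\<And>t. t \<in> {0..x} \<Longrightarrow> z'' t + q\<^sup>2 * t * z t = u t"
    and "z 0 = 0" "z' 0 = 0"
    and integrable: "(\<lambda>t. \<bar>u t\<bar> * t powr (-1/4)) integrable_on {0..x}"
  shows "\<bar>z x\<bar> \<le> 1 / q * x powr (-1/4) * integral {0..x} (\<lambda>t. \<bar>u t\<bar> * t powr (-1/4))"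
proof -
  define M where "M = 1 / q * x powr (-1/4)"
  have "((\<lambda>t. airy_green q x t * u t) has_integral z x) {0..x}"
    using airy_green_has_integral[OF \<open>q > 0\<close> less_imp_le[OF \<open>x > 0\<close>] dz dz' ode \<open>z 0 = 0\<close> \<open>z' 0 = 0\<close>] .
  then have integral_z: "((\<lambda>t. if t = 0 then 0 else airy_green q x t * u t) has_integral z x) {0..x}"
    by (rule has_integral_spike[OF negligible_sing[of 0], rotated]) simp
  have "norm (z x) \<le> integral {0..x} (\<lambda>t. M * (\<bar>u t\<bar> * t powr (-1/4)))"
    unfolding integral_unique[OF integral_z, symmetric]
  proof (rule integral_norm_bound_integral)
    show "(\<lambda>t. M * (\<bar>u t\<bar> * t powr (-1/4))) integrable_on {0..x}"
      using integrable_on_cmult_left[OF integrable, of M] by simp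
    fix t assume "t \<in> {0..x}"
    then show "norm (if t = 0 then 0 else airy_green q x t * u t) \<le> M * (\<bar>u t\<bar> * t powr (-1/4))"
      using mult_right_mono[OF airy_green_bound[OF \<open>q > 0\<close>, of t x], of "\<bar>u t\<bar>"]
      by (auto simp: M_def abs_mult mult_ac)
  qed (use integral_z in blast)
  then show ?thesis by (simp add: M_def)
qed

lemma airy_deviation_bound:
  fixes y y' y'' u :: "real \<Rightarrow> real"
  assumes "q > 0" and "x > 0"
    and dy: "\<And>t. t \<ge> 0 \<Longrightarrow> (y has_real_derivative y' t) (at t within {0..})"
    and dy': "\<And>t. t \<ge> 0 \<Longrightarrow> (y' has_real_derivative y'' t) (at t within {0..})"
    and ode: "\<And>t. t \<ge> 0 \<Longrightarrow> y'' t + q\<^sup>2 * t * y t = u t"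
    and integrable: "(\<lambda>t. \<bar>u t\<bar> * t powr (-1/4)) integrable_on {0..x}"
  defines "c1 \<equiv> y 0 / airy_coeff q 0 0" and "c2 \<equiv> y' 0 / airy_coeff q 1 0"
  shows "\<bar>y x - (c1 * airy_sol q 0 x + c2 * airy_sol q 1 x)\<bar>
         \<le> 1 / q * x powr (-1/4) * integral {0..x} (\<lambda>t. \<bar>u t\<bar> * t powr (-1/4))"
proof -
  define z where "z t = y t - c1 * airy_sol q 0 t - c2 * airy_sol q 1 t" for t
  define z' where "z' t = y' t - c1 * airy_sol_deriv q 0 t - c2 * airy_sol_deriv q 1 t" for t
  define z'' where "z'' t = y'' t + c1 * q\<^sup>2 * t * airy_sol q 0 t + c2 * q\<^sup>2 * t * airy_sol q 1 t" for t
  note derivs = airy_sol_derivatives[OF \<open>q > 0\<close>, THEN has_field_derivative_at_within]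
  have "\<bar>z x\<bar> \<le> 1 / q * x powr (-1/4) * integral {0..x} (\<lambda>t. \<bar>u t\<bar> * t powr (-1/4))"
  proof (rule airy_remainder_bound[OF \<open>q > 0\<close> \<open>x > 0\<close> _ _ _ _ _ integrable])
    fix t assume t: "t \<in> {0..x}"
    then have "t \<ge> 0" by simp
    show "(z has_real_derivative z' t) (at t within {0..x})"
      unfolding z_def[abs_def] z'_def
      by (rule DERIV_subset[of _ _ _ "{0..}"], (rule derivative_eq_intros dy[OF \<open>t \<ge> 0\<close>] derivs refl)+) auto
    show "(z' has_real_derivative z'' t) (at t within {0..x})"
      unfolding z'_def[abs_def] z''_def
      by (rule DERIV_subset[of _ _ _ "{0..}"], (rule derivative_eq_intros dy'[OF \<open>t \<ge> 0\<close>] derivs refl)+) auto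
    show "z'' t + q\<^sup>2 * t * z t = u t"
      using ode[OF \<open>t \<ge> 0\<close>] by (simp add: z_def z''_def algebra_simps)
  next
    show "z 0 = 0" "z' 0 = 0"
      using airy_coeff_0_pos[OF \<open>q > 0\<close>, of 0] airy_coeff_0_pos[OF \<open>q > 0\<close>, of 1]
      by (simp_all add: z_def z'_def c1_def c2_def airy_sol_at_0[simplified])
  qed
  then show ?thesis by (simp add: z_def algebra_simps)
qed

lemma abs_le_imp_ex_scale:
  fixes a b :: real
  assumes "\<bar>a\<bar> \<le> b"
  shows "\<exists>\<theta>. \<bar>\<theta>\<bar> \<le> 1 \<and> a = \<theta> * b"
proof (cases "b = 0")
  case True
  with assms show ?thesis by (intro exI[of _ 0]) auto
next
  case False
  with assms have "b > 0" by linarith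
  with assms show ?thesis by (intro exI[of _ "a / b"]) (auto simp: abs_divide)
qed

theorem mainTheorem10:
  fixes q :: real and y y' y'' u :: "real \<Rightarrow> real"
  assumes q_pos: "q > 0"
    and d1: "\<And>x. x \<ge> 0 \<Longrightarrow> (y has_real_derivative y' x) (at x within {0..})"
    and d2: "\<And>x. x \<ge> 0 \<Longrightarrow> (y' has_real_derivative y'' x) (at x within {0..})"
    and ode: "\<And>x. x \<ge> 0 \<Longrightarrow> y'' x + q\<^sup>2 * x * y x = u x"
  shows "\<exists>c1 c2 :: real. \<forall>x > 0.
           (\<lambda>t. \<bar>u t\<bar> * t powr (-1/4)) integrable_on {0..x} \<longrightarrow>
           (\<exists>\<theta>. \<bar>\<theta>\<bar> \<le> 1 \<and>
              y x = sqrt x * (c1 * bessel_J (-1/3) (2 * q * x powr (3/2) / 3)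
                            + c2 * bessel_J (1/3) (2 * q * x powr (3/2) / 3))
                    + \<theta> * (1 / q) * x powr (-1/4)
                        * integral {0..x} (\<lambda>t. \<bar>u t\<bar> * t powr (-1/4)))"
proof (rule exI, rule exI, intro allI impI)
  fix x :: real
  assume "x > 0" and integrable: "(\<lambda>t. \<bar>u t\<bar> * t powr (-1/4)) integrable_on {0..x}"
  have bessel: "sqrt x * bessel_J (-1/3) (2 * q * x powr (3/2) / 3) = airy_sol q 0 x"
    "sqrt x * bessel_J (1/3) (2 * q * x powr (3/2) / 3) = airy_sol q 1 x"
    using sqrt_bessel_J_eq_airy_sol[OF \<open>x > 0\<close> q_pos, of 0] sqrt_bessel_J_eq_airy_sol[OF \<open>x > 0\<close> q_pos, of 1]
    by (simp_all add: airy_order_def)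
  obtain \<theta> where "\<bar>\<theta>\<bar> \<le> 1"
    and "y x - (y 0 / airy_coeff q 0 0 * airy_sol q 0 x + y' 0 / airy_coeff q 1 0 * airy_sol q 1 x)
         = \<theta> * (1 / q * x powr (-1/4) * integral {0..x} (\<lambda>t. \<bar>u t\<bar> * t powr (-1/4)))"
    using abs_le_imp_ex_scale[OF airy_deviation_bound[OF q_pos \<open>x > 0\<close> d1 d2 ode integrable]] by blast
  then show "\<exists>\<theta>. \<bar>\<theta>\<bar> \<le> 1 \<and>
          y x = sqrt x * (y 0 / airy_coeff q 0 0 * bessel_J (-1/3) (2 * q * x powr (3/2) / 3)
                          + y' 0 / airy_coeff q 1 0 * bessel_J (1/3) (2 * q * x powr (3/2) / 3))
                + \<theta> * (1 / q) * x powr (-1/4) * integral {0..x} (\<lambda>t. \<bar>u t\<bar> * t powr (-1/4))"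
    unfolding distrib_left mult.left_commute[of "sqrt x"] bessel
    by (intro exI[of _ \<theta>]) (simp add: algebra_simps)
qed

end
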